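(* For every proper $S_0$-invariant subgroup $H$ of $E$, the set $\mathcal C_H=\{p\in P : \pi(w(p,\ell))\in H \text{ for some labelling } \ell \text{ of } p\}$ is a simplifiable hyperoctahedral category of partitions.
   Context: A partition $p\in P(k,l)$ ($k,l\ge 0$) is a partition of the disjoint union of $k$ ordered upper points $1,\dots,k$ and $l$ ordered lower points $1',\dots,l'$ into nonempty disjoint subsets called blocks; $P=\bigcup_{k,l}P(k,l)$. Operations on partitions: the tensor product $p\otimes q$ (horizontal juxtaposition, $q$ placed to the right of $p$); the composition of $p\in P(k,l)$ with $q\in P(l,m)$ (stack $p$ on top of $q$, identify the lower points of $p$ with the upper points of $q$, merge blocks connected through these middle points, then erase the middle points and any block lying entirely among them), giving a partition in $P(k,m)$; the involution $p^*$ (reflection of $p$ upside down); and rotation (moving the leftmost, resp. rightmost, point of one row to the leftmost, resp. rightmost, position of the other row, keeping the blocks). A category of partitions is a subset $\mathcal C\subseteq P$ containing the pair partition $\sqcap\in P(0,2)$ (one block consisting of two lower points) and the identity partition $|\in P(1,1)$ (one block $\{1,1'\}$), and closed under these four operations. Special partitions: the four block $b_4\in P(0,4)$ (one block of four lower points); the double singleton $\uparrow\otimes\uparrow\in P(0,2)$ (two one-point blocks); the pair positioner $\rho\in P(3,3)$ with blocks $\{1,2,2',3'\}$ and $\{3,1'\}$. A category of partitions $\mathcal C$ is hyperoctahedral if $b_4\in\mathcal C$ and $\uparrow\otimes\uparrow\notin\mathcal C$; it is simplifiable hyperoctahedral if moreover $\rho\in\mathcal C$. Let $L=\{a_1,a_2,\dots\}$,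 $\mathbb F_L$ the free group on $L$, $G=\mathbb Z_2^{*\infty}$ the free product of countably many copies of $\mathbb Z/2\mathbb Z$ generated by $a_1,a_2,\dots$ with $a_i^2=e$, and $\pi:\mathbb F_L\to G$ the canonical surjection. A labelling $\ell$ of a partition $p$ assigns pairwise distinct letters of $L$ to the blocks of $p$; $w(p,\ell)\in\mathbb F_L$ is the word obtained by reading the labels of the points of $p$ starting at the leftmost upper point, going through the upper row from left to right and then through the lower row from right to left. $E\le G$ is the subgroup of elements of even length. $S_0\subseteq\mathrm{End}(G)$ is the subsemigroup generated by: (1) for every $n\in\mathbb N$ and every choice of indices $i(1),\dots,i(n)$, the endomorphism with $a_k\mapsto a_{i(k)}$ for $1\le k\le n$ and $a_k\mapsto a_k$ for $k>n$; (2) for every $k$, the conjugation $w\mapsto a_kwa_k$. A subgroup $H$ is $S_0$-invariant if $\phi(H)\subseteq H$ for all $\phi\in S_0$. *)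

theory Defs
  imports "HOL-Library.Disjoint_Sets" "HOL-Algebra.Group"
begin

text \<open>Points of a partition: upper points Up 0 .. Up (k-1) (paper: 1..k) and
  lower points Lo 0 .. Lo (l-1) (paper: 1'..l'). A partition is a triple
  (k, l, B) where B is the set of blocks.\<close>

datatype pt = Up nat | Lo nat

type_synonym partition = "nat \<times> nat \<times> pt set set"

definition pts :: "nat \<Rightarrow> nat \<Rightarrow> pt set" where
  "pts k l = Up ` {..<k} \<union> Lo ` {..<l}"

definition Part :: "nat \<Rightarrow> nat \<Rightarrow> partition set" where
  "Part k l = {(k', l', B). k' = k \<and> l' = l \<and> partition_on (pts k l) B}"

definition AllPart :: "partition set" where
  "AllPart = (\<Union>k l. Part k l)"

fun shift_pt :: "nat \<Rightarrow> nat \<Rightarrow> pt \<Rightarrow> pt" where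
  "shift_pt k l (Up i) = Up (i + k)"
| "shift_pt k l (Lo j) = Lo (j + l)"

definition tensor :: "partition \<Rightarrow> partition \<Rightarrow> partition" where
  "tensor p q = (case p of (k1, l1, B1) \<Rightarrow> case q of (k2, l2, B2) \<Rightarrow>
     (k1 + k2, l1 + l2, B1 \<union> (\<lambda>b. shift_pt k1 l1 ` b) ` B2))"

fun swap_pt :: "pt \<Rightarrow> pt" where
  "swap_pt (Up i) = Lo i"
| "swap_pt (Lo j) = Up j"

definition involution :: "partition \<Rightarrow> partition" where
  "involution p = (case p of (k, l, B) \<Rightarrow> (l, k, (\<lambda>b. swap_pt ` b) ` B))"

definition same_block :: "pt set set \<Rightarrow> (pt \<times> pt) set" where
  "same_block B = {(x, y). \<exists>b\<in>B. x \<in> b \<and> y \<in> b}"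

text \<open>Composition: levels 0 (upper row of p), 1 (middle row), 2 (lower row of q).\<close>

fun top_emb :: "pt \<Rightarrow> nat \<times> nat" where
  "top_emb (Up i) = (0, i)"
| "top_emb (Lo j) = (1, j)"

fun bot_emb :: "pt \<Rightarrow> nat \<times> nat" where
  "bot_emb (Up i) = (1, i)"
| "bot_emb (Lo j) = (2, j)"

fun out_emb :: "pt \<Rightarrow> nat \<times> nat" where
  "out_emb (Up i) = (0, i)"
| "out_emb (Lo j) = (2, j)"

text \<open>p is placed on top of q; meaningful when the number of lower points of p
  equals the number of upper points of q.\<close>
definition pcomp :: "partition \<Rightarrow> partition \<Rightarrow> partition" where
  "pcomp p q = (case p of (k, l, B) \<Rightarrow> case q of (l', m, C) \<Rightarrow>
     (let R = map_prod top_emb top_emb ` same_block B \<union> map_prod bot_emb bot_emb ` same_block C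
      in (k, m, (\<lambda>x. {y \<in> pts k m. (out_emb x, out_emb y) \<in> R\<^sup>*}) ` pts k m)))"

fun rotUL_pt :: "pt \<Rightarrow> pt" where
  "rotUL_pt (Up i) = (if i = 0 then Lo 0 else Up (i - 1))"
| "rotUL_pt (Lo j) = Lo (Suc j)"

fun rotLU_pt :: "pt \<Rightarrow> pt" where
  "rotLU_pt (Lo j) = (if j = 0 then Up 0 else Lo (j - 1))"
| "rotLU_pt (Up i) = Up (Suc i)"

fun rotUR_pt :: "nat \<Rightarrow> nat \<Rightarrow> pt \<Rightarrow> pt" where
  "rotUR_pt k l (Up i) = (if i = k - 1 then Lo l else Up i)"
| "rotUR_pt k l (Lo j) = Lo j"

fun rotLR_pt :: "nat \<Rightarrow> nat \<Rightarrow> pt \<Rightarrow> pt" where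
  "rotLR_pt k l (Lo j) = (if j = l - 1 then Up k else Lo j)"
| "rotLR_pt k l (Up i) = Up i"

definition rotUL :: "partition \<Rightarrow> partition" where
  "rotUL p = (case p of (k, l, B) \<Rightarrow> (k - 1, l + 1, (\<lambda>b. rotUL_pt ` b) ` B))"

definition rotLU :: "partition \<Rightarrow> partition" where
  "rotLU p = (case p of (k, l, B) \<Rightarrow> (k + 1, l - 1, (\<lambda>b. rotLU_pt ` b) ` B))"

definition rotUR :: "partition \<Rightarrow> partition" where
  "rotUR p = (case p of (k, l, B) \<Rightarrow> (k - 1, l + 1, (\<lambda>b. rotUR_pt k l ` b) ` B))"

definition rotLR :: "partition \<Rightarrow> partition" where
  "rotLR p = (case p of (k, l, B) \<Rightarrow> (k + 1, l - 1, (\<lambda>b. rotLR_pt k l ` b) ` B))"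

definition pair_part :: partition where
  "pair_part = (0, 2, {{Lo 0, Lo 1}})"

definition id_part :: partition where
  "id_part = (1, 1, {{Up 0, Lo 0}})"

definition four_block :: partition where
  "four_block = (0, 4, {{Lo 0, Lo 1, Lo 2, Lo 3}})"

definition double_singleton :: partition where
  "double_singleton = (0, 2, {{Lo 0}, {Lo 1}})"

definition pair_positioner :: partition where
  "pair_positioner = (3, 3, {{Up 0, Up 1, Lo 1, Lo 2}, {Up 2, Lo 0}})"

definition category_of_partitions :: "partition set \<Rightarrow> bool" where
  "category_of_partitions C \<longleftrightarrow>
     C \<subseteq> AllPart \<and> pair_part \<in> C \<and> id_part \<in> C \<and>
     (\<forall>p\<in>C. \<forall>q\<in>C. tensor p q \<in> C) \<and>
     (\<forall>p\<in>C. \<forall>q\<in>C. fst (snd p) = fst q \<longrightarrow> pcomp p q \<in> C) \<and>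
     (\<forall>p\<in>C. involution p \<in> C) \<and>
     (\<forall>p\<in>C. fst p \<ge> 1 \<longrightarrow> rotUL p \<in> C \<and> rotUR p \<in> C) \<and>
     (\<forall>p\<in>C. fst (snd p) \<ge> 1 \<longrightarrow> rotLU p \<in> C \<and> rotLR p \<in> C)"

definition hyperoctahedral :: "partition set \<Rightarrow> bool" where
  "hyperoctahedral C \<longleftrightarrow> category_of_partitions C \<and> four_block \<in> C \<and> double_singleton \<notin> C"

definition simplifiable_hyperoctahedral :: "partition set \<Rightarrow> bool" where
  "simplifiable_hyperoctahedral C \<longleftrightarrow> hyperoctahedral C \<and> pair_positioner \<in> C"

text \<open>Letters a_1, a_2, ... are encoded by natural numbers (a_{i+1} is i).
  Elements of G are reduced words (no two adjacent equal letters).\<close>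

fun rcons :: "nat \<Rightarrow> nat list \<Rightarrow> nat list" where
  "rcons x [] = [x]"
| "rcons x (y # ys) = (if x = y then ys else x # y # ys)"

definition reduce :: "nat list \<Rightarrow> nat list" where
  "reduce ws = foldr rcons ws []"

definition reduced :: "nat list \<Rightarrow> bool" where
  "reduced ws \<longleftrightarrow> (\<forall>i. Suc i < length ws \<longrightarrow> ws ! i \<noteq> ws ! Suc i)"

definition Z2inf :: "nat list monoid" where
  "Z2inf = \<lparr>carrier = {ws. reduced ws}, mult = (\<lambda>x y. reduce (x @ y)), one = []\<rparr>"

text \<open>The canonical surjection from the free group, applied to a word (positive
  letters only, as all words w(p,l) are).\<close>
definition pi_word :: "nat list \<Rightarrow> nat list" where
  "pi_word w = reduce w"

definition Even_sub :: "nat list set" where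
  "Even_sub = {g \<in> carrier Z2inf. even (length g)}"

definition relabel_endo :: "nat \<Rightarrow> (nat \<Rightarrow> nat) \<Rightarrow> nat list \<Rightarrow> nat list" where
  "relabel_endo n f w = reduce (map (\<lambda>a. if a < n then f a else a) w)"

definition conj_endo :: "nat \<Rightarrow> nat list \<Rightarrow> nat list" where
  "conj_endo k w = reduce (k # w @ [k])"

inductive_set S0 :: "(nat list \<Rightarrow> nat list) set" where
  gen_relabel: "relabel_endo n f \<in> S0"
| gen_conj: "conj_endo k \<in> S0"
| comp: "\<phi> \<in> S0 \<Longrightarrow> \<psi> \<in> S0 \<Longrightarrow> \<phi> \<circ> \<psi> \<in> S0"

definition S0_invariant :: "nat list set \<Rightarrow> bool" where
  "S0_invariant H \<longleftrightarrow> (\<forall>\<phi>\<in>S0. \<phi> ` H \<subseteq> H)"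

definition block_of :: "pt set set \<Rightarrow> pt \<Rightarrow> pt set" where
  "block_of B x = (THE b. b \<in> B \<and> x \<in> b)"

definition is_labelling :: "partition \<Rightarrow> (pt set \<Rightarrow> nat) \<Rightarrow> bool" where
  "is_labelling p lab \<longleftrightarrow> inj_on lab (snd (snd p))"

definition word :: "partition \<Rightarrow> (pt set \<Rightarrow> nat) \<Rightarrow> nat list" where
  "word p lab = (case p of (k, l, B) \<Rightarrow>
     map (\<lambda>x. lab (block_of B x)) (map Up [0..<k] @ map Lo (rev [0..<l])))"

definition C_H :: "nat list set \<Rightarrow> partition set" where
  "C_H H = {p \<in> AllPart. \<exists>lab. is_labelling p lab \<and> pi_word (word p lab) \<in> H}"

end

theory Submission
  imports Defs
begin

text \<open>Because \<open>H\<close> is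
  closed under relabelling of letters, whether a partition lies in \<open>C\<^sub>H\<close> does not depend on
  the labelling: any colouring of the points that is constant on blocks may be read off instead.
  Each category operation then becomes an operation on boundary words under which \<open>H\<close> is
  closed: the involution reverses the word (inversion), rotations rotate it cyclically
  (conjugation by a letter), the tensor product inserts one word into the other (conjugation
  and multiplication), and in a composition the two words share the middle row in opposite
  directions, which cancels in their product. The pair, identity, four block and pair
  positioner read off words that reduce to the identity; the double singleton reads off
  \<open>a b\<close> with \<open>a \<noteq> b\<close>, whose relabellings generate all of \<open>E\<close>, so \<open>H\<close> being proper
  excludes it.\<close>

section \<open>Free reduction of words\<close>

lemma reduced_Cons: "reduced (x # r) \<longleftrightarrow> reduced r \<and> (r = [] \<or> hd r \<noteq> x)"
  by (cases r) (auto simp: reduced_def nth_Cons split: nat.splits)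

lemma reduced_Nil [simp]: "reduced []"
  by (simp add: reduced_def)

lemma reduced_rcons: "reduced r \<Longrightarrow> reduced (rcons x r)"
  by (cases r) (auto simp: reduced_Cons)

lemma reduced_foldr_rcons: "reduced r \<Longrightarrow> reduced (foldr rcons xs r)"
  by (induction xs) (auto intro: reduced_rcons)

lemma reduced_reduce [simp]: "reduced (reduce w)"
  unfolding reduce_def by (rule reduced_foldr_rcons) simp

lemma reduce_Nil [simp]: "reduce [] = []"
  by (simp add: reduce_def)

lemma reduce_Cons: "reduce (x # w) = rcons x (reduce w)"
  by (simp add: reduce_def)

lemma reduce_reduced: "reduced r \<Longrightarrow> reduce r = r"
proof (induction r)
  case (Cons x r)
  then show ?case by (cases r) (auto simp: reduce_Cons reduced_Cons)
qed simp

lemma rcons_rcons: "reduced r \<Longrightarrow> rcons x (rcons x r) = r"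
  by (cases r rule: remdups_adj.cases) (auto simp: reduced_Cons)

lemma foldr_rcons_reduce: "reduced r \<Longrightarrow> foldr rcons (reduce xs) r = foldr rcons xs r"
proof (induction xs)
  case (Cons x xs)
  show ?case
  proof (cases "\<exists>r'. reduce xs = x # r'")
    case True
    then obtain r' where r': "reduce xs = x # r'" by blast
    have "foldr rcons xs r = rcons x (foldr rcons r' r)"
      using Cons r' by simp
    then show ?thesis
      using r' reduced_foldr_rcons[OF Cons.prems] by (simp add: reduce_Cons rcons_rcons)
  next
    case False
    then have "rcons x (reduce xs) = x # reduce xs"
      by (cases "reduce xs") auto
    then show ?thesis using Cons by (simp add: reduce_Cons)
  qed
qed simp

lemma reduce_append: "reduce (xs @ ys) = foldr rcons xs (reduce ys)"
  by (simp add: reduce_def)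

lemma reduce_append_reduce_left: "reduce (reduce xs @ ys) = reduce (xs @ ys)"
  by (simp add: reduce_append foldr_rcons_reduce)

lemma reduce_append_reduce_right: "reduce (xs @ reduce ys) = reduce (xs @ ys)"
  by (simp add: reduce_append reduce_reduced)

lemma reduce_middle: "reduce (a @ reduce v @ b) = reduce (a @ v @ b)"
  by (metis append_assoc reduce_append_reduce_left reduce_append_reduce_right)

lemma reduce_append_rev: "reduce (u @ rev u) = []"
proof (induction u)
  case (Cons x u)
  have "reduce ((x # u) @ rev (x # u)) = reduce ([x] @ reduce (u @ rev u) @ [x])"
    by (simp only: reduce_middle) simp
  also have "\<dots> = []" using Cons by (simp add: reduce_def)
  finally show ?case .
qed simp

lemma reduce_cancel: "reduce (a @ u @ rev u @ b) = reduce (a @ b)"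
  using reduce_middle[of a "u @ rev u" b] by (simp add: reduce_append_rev)

lemma reduce_Cons_Cons: "reduce (x # x # w) = reduce w"
  by (simp add: reduce_Cons rcons_rcons)

lemma reduce_replicate_double: "reduce (replicate (2 * n) a) = []"
  by (induction n) (simp_all add: reduce_Cons_Cons)

lemma reduce_map_reduce: "reduce (map h (reduce w)) = reduce (map h w)"
proof (induction w)
  case (Cons x w)
  show ?case
  proof (cases "\<exists>r. reduce w = x # r")
    case True
    then obtain r where r: "reduce w = x # r" by blast
    have "reduced r" using reduced_reduce[of w] r by (simp add: reduced_Cons)
    moreover have "reduce (map h (x # w)) = rcons (h x) (rcons (h x) (reduce (map h r)))"
      using Cons r by (simp add: reduce_Cons)
    ultimately show ?thesis using r by (simp add: reduce_Cons rcons_rcons)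
  next
    case False
    then have "rcons x (reduce w) = x # reduce w" by (cases "reduce w") auto
    then show ?thesis using Cons by (simp add: reduce_Cons)
  qed
qed simp

lemma reduced_rev: "reduced w \<Longrightarrow> reduced (rev w)"
  unfolding reduced_def
  by (auto simp: rev_nth)
    (metis Suc_diff_Suc diff_Suc_less length_greater_0_conv list.size(3) not_less_zero zero_less_diff)

lemma Z2inf_group: "group Z2inf"
proof (rule groupI)
  fix x assume x: "x \<in> carrier Z2inf"
  show "\<one>\<^bsub>Z2inf\<^esub> \<otimes>\<^bsub>Z2inf\<^esub> x = x"
    using x by (simp add: Z2inf_def reduce_reduced)
  show "\<exists>y\<in>carrier Z2inf. y \<otimes>\<^bsub>Z2inf\<^esub> x = \<one>\<^bsub>Z2inf\<^esub>"
    using x reduced_rev reduce_append_rev[of "rev x"] by (auto simp: Z2inf_def)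
qed (auto simp: Z2inf_def reduce_append_reduce_left reduce_append_reduce_right)

lemma factor_through_on:
  assumes "\<And>x y. x \<in> A \<Longrightarrow> y \<in> A \<Longrightarrow> g x = g y \<Longrightarrow> f x = f y"
  shows "\<exists>\<phi>. \<forall>x\<in>A. f x = \<phi> (g x)"
proof (intro exI ballI)
  fix x assume x: "x \<in> A"
  let ?y = "SOME y. y \<in> A \<and> g y = g x"
  have "?y \<in> A \<and> g ?y = g x" by (rule someI[of _ x]) (simp add: x)
  then show "f x = f ?y" using assms[of x ?y] x by simp
qed

lemma extend_along_equiv:
  assumes "equiv UNIV E" and "\<And>x y. x \<in> A \<Longrightarrow> y \<in> A \<Longrightarrow> (h x, h y) \<in> E \<Longrightarrow> f x = f y"
  shows "\<exists>F. F respects E \<and> (\<forall>x\<in>A. F (h x) = f x)"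
proof (intro exI conjI congruentI ballI)
  let ?F = "\<lambda>v. f (SOME x. x \<in> A \<and> (v, h x) \<in> E)"
  show "?F v = ?F w" if "(v, w) \<in> E" for v w
  proof -
    have "(v, u) \<in> E \<longleftrightarrow> (w, u) \<in> E" for u
      using that assms(1) by (meson equivE symD transD)
    then show ?thesis by simp
  qed
  show "?F (h x) = f x" if x: "x \<in> A" for x
  proof -
    have "(SOME y. y \<in> A \<and> (h x, h y) \<in> E) \<in> A \<and> (h x, h (SOME y. y \<in> A \<and> (h x, h y) \<in> E)) \<in> E"
      by (rule someI[of _ x]) (use x assms(1) in \<open>auto simp: equiv_def refl_on_def\<close>)
    then show ?thesis using assms(2) x by metis
  qed
qed

section \<open>Words in an \<open>S\<^sub>0\<close>-invariant subgroup\<close>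

locale S0_invariant_subgroup =
  fixes H :: "nat list set"
  assumes subgroup: "subgroup H Z2inf" and invariant: "S0_invariant H"
begin

lemma Nil_in_H: "[] \<in> H"
  using subgroup.one_closed[OF subgroup] by (simp add: Z2inf_def)

lemma reduce_append_in_H: "reduce a \<in> H \<Longrightarrow> reduce b \<in> H \<Longrightarrow> reduce (a @ b) \<in> H"
  using subgroup.m_closed[OF subgroup, of "reduce a" "reduce b"]
  by (simp add: Z2inf_def reduce_append_reduce_left reduce_append_reduce_right)

lemma reduce_rev_in_H:
  assumes "reduce w \<in> H"
  shows "reduce (rev w) \<in> H"
proof -
  have "inv\<^bsub>Z2inf\<^esub> (reduce w) = reduce (rev w)"
  proof (rule group.inv_equality[OF Z2inf_group])
    show "reduce (rev w) \<otimes>\<^bsub>Z2inf\<^esub> reduce w = \<one>\<^bsub>Z2inf\<^esub>"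
      using reduce_append_rev[of "rev w"]
      by (simp add: Z2inf_def reduce_append_reduce_left reduce_append_reduce_right)
  qed (auto simp: Z2inf_def)
  then show ?thesis
    using subgroup.m_inv_closed[OF subgroup assms] by simp
qed

lemma reduce_map_in_H:
  assumes "reduce w \<in> H"
  shows "reduce (map \<phi> w) \<in> H"
proof -
  define n where "n = Suc (Max (set w))"
  have "relabel_endo n \<phi> (reduce w) \<in> H"
    using assms invariant S0.gen_relabel unfolding S0_invariant_def by blast
  moreover have "map (\<lambda>a. if a < n then \<phi> a else a) w = map \<phi> w"
    by (simp add: n_def le_imp_less_Suc)
  ultimately show ?thesis
    by (simp add: relabel_endo_def reduce_map_reduce)
qed

lemma reduce_conj_in_H: "reduce w \<in> H \<Longrightarrow> reduce (u @ w @ rev u) \<in> H"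
proof (induction u)
  case (Cons x u)
  then have "conj_endo x (reduce (u @ w @ rev u)) \<in> H"
    using invariant S0.gen_conj unfolding S0_invariant_def by blast
  then show ?case
    using reduce_middle[of "[x]" "u @ w @ rev u" "[x]"] by (simp add: conj_endo_def)
qed simp

lemma reduce_rotate1_in_H: "reduce (x # v) \<in> H \<Longrightarrow> reduce (v @ [x]) \<in> H"
  using reduce_conj_in_H[of "x # v" "[x]"] reduce_cancel[of "[]" "[x]" "v @ [x]"] by simp

lemma reduce_insert_in_H:
  assumes "reduce (u @ v) \<in> H" and "reduce w \<in> H"
  shows "reduce (u @ w @ v) \<in> H"
  using reduce_append_in_H[OF reduce_conj_in_H[OF assms(2), of u] assms(1)]
    reduce_cancel[of "u @ w" "rev u" v] by simp

lemma reduce_cancel_in_H: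
  assumes "reduce (u @ m) \<in> H" and "reduce (rev m @ v) \<in> H"
  shows "reduce (u @ v) \<in> H"
  using reduce_append_in_H[OF assms] reduce_cancel[of u m v] by simp

lemma reduce_map_coarsening_in_H:
  assumes "reduce (map g xs) \<in> H"
    and "\<And>x y. x \<in> set xs \<Longrightarrow> y \<in> set xs \<Longrightarrow> g x = g y \<Longrightarrow> f x = f y"
  shows "reduce (map f xs) \<in> H"
proof -
  obtain \<phi> where "\<forall>x\<in>set xs. f x = \<phi> (g x)"
    using factor_through_on[of "set xs" g f] assms(2) by blast
  then have "map f xs = map \<phi> (map g xs)" by simp
  then show ?thesis using reduce_map_in_H[OF assms(1)] by metis
qed

lemma even_word_in_H:
  assumes "reduce [a, b] \<in> H" and "a \<noteq> b" and "even (length w)"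
  shows "reduce w \<in> H"
  using assms(3)
proof (induction w rule: induct_list012)
  case (3 x y zs)
  have "reduce (map (\<lambda>z. if z = a then x else y) [a, b]) \<in> H"
    by (rule reduce_map_in_H[OF assms(1)])
  then have "reduce [x, y] \<in> H" using assms(2) by simp
  with 3 show ?case using reduce_append_in_H[of "[x, y]" zs] by simp
qed (simp_all add: Nil_in_H)

end

section \<open>Partitions and their boundary words\<close>

definition reading_order :: "nat \<Rightarrow> nat \<Rightarrow> pt list" where
  "reading_order k l = map Up [0..<k] @ map Lo (rev [0..<l])"

lemma Up_in_pts [simp]: "Up i \<in> pts k l \<longleftrightarrow> i < k"
  by (auto simp: pts_def)

lemma Lo_in_pts [simp]: "Lo j \<in> pts k l \<longleftrightarrow> j < l"
  by (auto simp: pts_def)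

lemma finite_pts: "finite (pts k l)"
  by (simp add: pts_def)

lemma set_reading_order: "set (reading_order k l) = pts k l"
  by (auto simp: reading_order_def pts_def)

lemma length_reading_order: "length (reading_order k l) = k + l"
  by (simp add: reading_order_def)

lemma word_eq_map_reading_order:
  "word (k, l, B) lab = map (\<lambda>x. lab (block_of B x)) (reading_order k l)"
  by (simp add: word_def reading_order_def)

lemma reading_order_tensor:
  "reading_order (k1 + k2) (l1 + l2) =
     map Up [0..<k1] @ map (shift_pt k1 l1) (reading_order k2 l2) @ map Lo (rev [0..<l1])"
proof -
  have "[0..<a + b] = [0..<a] @ map (\<lambda>i. i + a) [0..<b]" for a b :: nat
    by (simp add: upt_add_eq_append[of 0 a b] map_add_upt add.commute)
  then show ?thesis by (simp add: reading_order_def rev_map)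
qed

lemma block_of_eq: "partition_on A B \<Longrightarrow> b \<in> B \<Longrightarrow> x \<in> b \<Longrightarrow> block_of B x = b"
  unfolding block_of_def
  by (rule the_equality) (auto dest: partition_onD2 disjointD)

lemma block_of_mem:
  assumes "partition_on A B" and "x \<in> A"
  shows "block_of B x \<in> B" and "x \<in> block_of B x"
proof -
  obtain b where "b \<in> B" "x \<in> b" using partition_onD1[OF assms(1)] assms(2) by blast
  then show "block_of B x \<in> B" and "x \<in> block_of B x"
    using block_of_eq[OF assms(1)] by simp_all
qed

lemma same_blockI: "b \<in> B \<Longrightarrow> x \<in> b \<Longrightarrow> y \<in> b \<Longrightarrow> (x, y) \<in> same_block B"
  by (auto simp: same_block_def)

lemma same_block_mono: "B \<subseteq> B' \<Longrightarrow> same_block B \<subseteq> same_block B'"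
  by (auto simp: same_block_def)

lemma same_block_image: "(x, y) \<in> same_block B \<Longrightarrow> (f x, f y) \<in> same_block ((`) f ` B)"
  by (auto simp: same_block_def)

lemma partition_on_image:
  assumes "partition_on A P" and "inj_on f A"
  shows "partition_on (f ` A) ((`) f ` P)"
proof -
  have "(`) f ` P - {{}} = (`) f ` P" using partition_onD3[OF assms(1)] by auto
  then show ?thesis using partition_on_inj_image[OF assms] by simp
qed

lemma partition_on_Un:
  assumes P: "partition_on A P" and Q: "partition_on B Q" and AB: "A \<inter> B = {}"
  shows "partition_on (A \<union> B) (P \<union> Q)"
proof (rule partition_onI)
  show "\<Union>(P \<union> Q) = A \<union> B" using P Q by (auto dest: partition_onD1)
  show "{} \<notin> P \<union> Q" using P Q by (auto dest: partition_onD3)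
  have PA: "p \<subseteq> A" if "p \<in> P" for p using that partition_onD1[OF P] by blast
  have QB: "q \<subseteq> B" if "q \<in> Q" for q using that partition_onD1[OF Q] by blast
  have sep: "disjnt p q" if "p \<subseteq> A" "q \<subseteq> B" for p q
    using that AB by (auto simp: disjnt_def)
  fix p q assume p: "p \<in> P \<union> Q" and q: "q \<in> P \<union> Q" and "p \<noteq> q"
  show "disjnt p q"
  proof (cases "p \<in> P \<longleftrightarrow> q \<in> P")
    case True
    then have "p \<in> P \<and> q \<in> P \<or> p \<in> Q \<and> q \<in> Q" using p q by blast
    then show ?thesis
    proof (elim disjE conjE)
      show "p \<in> P \<Longrightarrow> q \<in> P \<Longrightarrow> disjnt p q"
        by (rule pairwiseD[OF partition_onD2[OF P] _ _ \<open>p \<noteq> q\<close>])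
      show "p \<in> Q \<Longrightarrow> q \<in> Q \<Longrightarrow> disjnt p q"
        by (rule pairwiseD[OF partition_onD2[OF Q] _ _ \<open>p \<noteq> q\<close>])
    qed
  next
    case False
    then have "p \<in> P \<and> q \<in> Q \<or> q \<in> P \<and> p \<in> Q" using p q by blast
    then show ?thesis
      by (elim disjE conjE) (metis PA QB sep disjnt_sym)+
  qed
qed

lemma partition_on_classes:
  assumes "equiv UNIV E"
  shows "partition_on A ((\<lambda>x. {y \<in> A. (h x, h y) \<in> E}) ` A)"
proof -
  let ?r = "{(x, y). x \<in> A \<and> y \<in> A \<and> (h x, h y) \<in> E}"
  have equiv: "equiv A ?r"
  proof (rule equivI)
    show "refl_on A ?r" using assms by (auto simp: refl_on_def equiv_def)
    show "sym ?r" using assms by (auto simp: sym_def equiv_def)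
    show "trans ?r" using assms unfolding trans_def equiv_def by blast
  qed auto
  have "?r `` {x} = {y \<in> A. (h x, h y) \<in> E}" if "x \<in> A" for x
    using that by auto
  then have "A // ?r = (\<lambda>x. {y \<in> A. (h x, h y) \<in> E}) ` A"
    unfolding quotient_def by (simp add: UNION_singleton_eq_range)
  then show ?thesis using partition_on_quotient[OF equiv] by simp
qed

lemma bij_betw_swap_pt: "bij_betw swap_pt (pts k l) (pts l k)"
  by (rule bij_betw_byWitness[where f' = swap_pt]) (auto simp: pts_def)

lemma bij_betw_rotUL_pt: "bij_betw rotUL_pt (pts (Suc k) l) (pts k (Suc l))"
  by (rule bij_betw_byWitness[where f' = rotLU_pt]) (auto simp: pts_def)

lemma bij_betw_rotUR_pt: "bij_betw (rotUR_pt (Suc k) l) (pts (Suc k) l) (pts k (Suc l))"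
  by (rule bij_betw_byWitness[where f' = "rotLR_pt k (Suc l)"]) (auto simp: pts_def)

lemma reading_order_swap: "reading_order l k = map swap_pt (rev (reading_order k l))"
  by (simp add: reading_order_def rev_map)

lemma reading_order_rotUL:
  "reading_order k (Suc l) = map rotUL_pt (tl (reading_order (Suc k) l) @ [Up 0])"
proof -
  have "[0..<Suc k] = 0 # map Suc [0..<k]"
    by (simp add: upt_conv_Cons map_Suc_upt del: upt_Suc)
  moreover have "rev [0..<Suc l] = map Suc (rev [0..<l]) @ [0]"
    by (simp add: upt_conv_Cons rev_map map_Suc_upt[symmetric] del: upt_Suc)
  ultimately show ?thesis by (simp add: reading_order_def del: upt_Suc)
qed

lemma reading_order_rotUR: "reading_order k (Suc l) = map (rotUR_pt (Suc k) l) (reading_order (Suc k) l)"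
  by (simp add: reading_order_def)

lemma rotLU_eq_involution_rotUL: "rotLU p = involution (rotUL (involution p))"
proof -
  have "swap_pt (rotUL_pt (swap_pt x)) = rotLU_pt x" for x
    by (cases x) auto
  then show ?thesis
    by (simp add: rotLU_def rotUL_def involution_def image_image split: prod.split)
qed

lemma rotLR_eq_involution_rotUR: "rotLR p = involution (rotUR (involution p))"
proof -
  have "swap_pt (rotUR_pt l k (swap_pt x)) = rotLR_pt k l x" for k l x
    by (cases x) auto
  then show ?thesis
    by (simp add: rotLR_def rotUR_def involution_def image_image split: prod.split)
qed

lemma pts_tensor: "pts (k1 + k2) (l1 + l2) = pts k1 l1 \<union> shift_pt k1 l1 ` pts k2 l2"
proof -
  have "x \<in> shift_pt k1 l1 ` pts k2 l2" if "x \<in> pts (k1 + k2) (l1 + l2)" "x \<notin> pts k1 l1" for x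
  proof (cases x)
    case (Up i)
    with that show ?thesis by (auto intro!: image_eqI[of _ _ "Up (i - k1)"])
  next
    case (Lo j)
    with that show ?thesis by (auto intro!: image_eqI[of _ _ "Lo (j - l1)"])
  qed
  moreover have "shift_pt k1 l1 ` pts k2 l2 \<subseteq> pts (k1 + k2) (l1 + l2)"
    by (auto simp: pts_def)
  ultimately show ?thesis by (auto simp: pts_def)
qed

lemma inj_shift_pt: "inj (shift_pt k l)"
proof (rule injI)
  show "shift_pt k l x = shift_pt k l y \<Longrightarrow> x = y" for x y
    by (cases x; cases y) auto
qed

section \<open>Closure properties of \<open>C_H\<close>\<close>

context S0_invariant_subgroup
begin

lemma C_H_iff:
  "(k, l, B) \<in> C_H H \<longleftrightarrow> partition_on (pts k l) B \<and>
     (\<forall>f :: pt \<Rightarrow> nat. f respects same_block B \<longrightarrow> reduce (map f (reading_order k l)) \<in> H)"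
proof
  assume "(k, l, B) \<in> C_H H"
  then obtain lab where P: "partition_on (pts k l) B" and lab: "inj_on lab B"
    and w: "reduce (map (\<lambda>x. lab (block_of B x)) (reading_order k l)) \<in> H"
    by (auto simp: C_H_def AllPart_def Part_def is_labelling_def word_eq_map_reading_order
        pi_word_def)
  have "reduce (map f (reading_order k l)) \<in> H" if f: "f respects same_block B" for f :: "pt \<Rightarrow> nat"
  proof (rule reduce_map_coarsening_in_H[OF w])
    fix x y assume "x \<in> set (reading_order k l)" "y \<in> set (reading_order k l)"
      and "lab (block_of B x) = lab (block_of B y)"
    then have "x \<in> block_of B x" "y \<in> block_of B x" "block_of B x \<in> B"
      using block_of_mem[OF P] inj_onD[OF lab] by (metis set_reading_order)+
    then have "(x, y) \<in> same_block B" by (auto simp: same_block_def)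
    then show "f x = f y" by (rule congruentD[OF f])
  qed
  with P show "partition_on (pts k l) B \<and>
     (\<forall>f :: pt \<Rightarrow> nat. f respects same_block B \<longrightarrow> reduce (map f (reading_order k l)) \<in> H)"
    by blast
next
  assume "partition_on (pts k l) B \<and>
     (\<forall>f :: pt \<Rightarrow> nat. f respects same_block B \<longrightarrow> reduce (map f (reading_order k l)) \<in> H)"
  then have P: "partition_on (pts k l) B"
    and words: "\<And>f :: pt \<Rightarrow> nat. f respects same_block B \<Longrightarrow> reduce (map f (reading_order k l)) \<in> H"
    by blast+
  obtain lab :: "pt set \<Rightarrow> nat" where lab: "inj_on lab B"
    using finite_imp_inj_to_nat_seg[OF finite_elements[OF finite_pts P]] by blast
  have "(\<lambda>x. lab (block_of B x)) respects same_block B"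
    by (rule congruentI) (auto simp: same_block_def block_of_eq[OF P])
  then have "reduce (map (\<lambda>x. lab (block_of B x)) (reading_order k l)) \<in> H"
    by (rule words)
  then show "(k, l, B) \<in> C_H H"
    using P lab by (auto simp: C_H_def AllPart_def Part_def is_labelling_def
        word_eq_map_reading_order pi_word_def)
qed

lemma C_H_partition: "(k, l, B) \<in> C_H H \<Longrightarrow> partition_on (pts k l) B"
  by (simp add: C_H_iff)

lemma C_H_word:
  "(k, l, B) \<in> C_H H \<Longrightarrow> f respects same_block B \<Longrightarrow> reduce (map f (reading_order k l)) \<in> H"
  by (simp add: C_H_iff)

lemma C_H_intro:
  assumes "partition_on (pts k l) B"
    and "\<And>x y. x \<in> pts k l \<Longrightarrow> y \<in> pts k l \<Longrightarrow> g x = g y \<Longrightarrow> (x, y) \<in> same_block B"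
    and "reduce (map g (reading_order k l)) \<in> H"
  shows "(k, l, B) \<in> C_H H"
proof -
  have "reduce (map f (reading_order k l)) \<in> H" if f: "f respects same_block B" for f :: "pt \<Rightarrow> nat"
    by (rule reduce_map_coarsening_in_H[OF assms(3)])
      (simp add: set_reading_order assms(2) congruentD[OF f])
  with assms(1) show ?thesis by (simp add: C_H_iff)
qed

lemma C_H_transport:
  assumes C: "(k, l, B) \<in> C_H H" and bij: "bij_betw f (pts k l) (pts k' l')"
    and order: "reading_order k' l' = map f L"
    and words: "\<And>g. reduce (map g (reading_order k l)) \<in> H \<Longrightarrow> reduce (map g L) \<in> H"
  shows "(k', l', (`) f ` B) \<in> C_H H"
proof -
  have "partition_on (pts k' l') ((`) f ` B)"
    using partition_on_image[OF C_H_partition[OF C] bij_betw_imp_inj_on[OF bij]]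
      bij_betw_imp_surj_on[OF bij]
    by simp
  moreover have "reduce (map g (reading_order k' l')) \<in> H"
    if g: "g respects same_block ((`) f ` B)" for g :: "pt \<Rightarrow> nat"
  proof -
    have "(g \<circ> f) respects same_block B"
      by (rule congruentI) (simp add: congruentD[OF g] same_block_image)
    then have "reduce (map (g \<circ> f) (reading_order k l)) \<in> H"
      by (rule C_H_word[OF C])
    then show ?thesis using words by (simp add: order)
  qed
  ultimately show ?thesis by (simp add: C_H_iff)
qed

lemma C_H_involution:
  assumes "p \<in> C_H H"
  shows "involution p \<in> C_H H"
proof -
  obtain k l B where p: "p = (k, l, B)" by (cases p)
  have "(l, k, (`) swap_pt ` B) \<in> C_H H"
    using assms unfolding p
    by (rule C_H_transport[OF _ bij_betw_swap_pt reading_order_swap])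
      (metis reduce_rev_in_H rev_map)
  then show ?thesis by (simp add: p involution_def)
qed

lemma C_H_rotUL:
  assumes "p \<in> C_H H" and "1 \<le> fst p"
  shows "rotUL p \<in> C_H H"
proof -
  obtain k l B where p: "p = (Suc k, l, B)"
    using assms(2) by (metis One_nat_def Suc_le_D prod.collapse)
  have "map g (reading_order (Suc k) l) = g (Up 0) # map g (tl (reading_order (Suc k) l))"
    for g :: "pt \<Rightarrow> nat"
    by (simp add: reading_order_def upt_conv_Cons del: upt_Suc)
  then have "reduce (map g (tl (reading_order (Suc k) l) @ [Up 0])) \<in> H"
    if "reduce (map g (reading_order (Suc k) l)) \<in> H" for g :: "pt \<Rightarrow> nat"
    using reduce_rotate1_in_H that by simp
  then show ?thesis
    using C_H_transport[OF _ bij_betw_rotUL_pt reading_order_rotUL] assms(1)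
    by (simp add: p rotUL_def)
qed

lemma C_H_rotUR:
  assumes "p \<in> C_H H" and "1 \<le> fst p"
  shows "rotUR p \<in> C_H H"
proof -
  obtain k l B where p: "p = (Suc k, l, B)"
    using assms(2) by (metis One_nat_def Suc_le_D prod.collapse)
  show ?thesis
    using C_H_transport[OF _ bij_betw_rotUR_pt reading_order_rotUR] assms(1)
    by (simp add: p rotUR_def)
qed

lemma C_H_rotLU: "p \<in> C_H H \<Longrightarrow> 1 \<le> fst (snd p) \<Longrightarrow> rotLU p \<in> C_H H"
  unfolding rotLU_eq_involution_rotUL
  by (intro C_H_involution C_H_rotUL) (auto simp: involution_def split: prod.split)

lemma C_H_rotLR: "p \<in> C_H H \<Longrightarrow> 1 \<le> fst (snd p) \<Longrightarrow> rotLR p \<in> C_H H"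
  unfolding rotLR_eq_involution_rotUR
  by (intro C_H_involution C_H_rotUR) (auto simp: involution_def split: prod.split)

lemma C_H_tensor:
  assumes "p \<in> C_H H" and "q \<in> C_H H"
  shows "tensor p q \<in> C_H H"
proof -
  obtain k1 l1 B1 where p: "p = (k1, l1, B1)" by (cases p)
  obtain k2 l2 B2 where q: "q = (k2, l2, B2)" by (cases q)
  let ?s = "shift_pt k1 l1"
  let ?B = "B1 \<union> (`) ?s ` B2"
  have P1: "partition_on (pts k1 l1) B1" and P2: "partition_on (pts k2 l2) B2"
    using assms by (simp_all add: p q C_H_partition)
  have "pts k1 l1 \<inter> ?s ` pts k2 l2 = {}"
    by (auto simp: pts_def)
  then have "partition_on (pts (k1 + k2) (l1 + l2)) ?B"
    unfolding pts_tensor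
    by (rule partition_on_Un[OF P1 partition_on_image[OF P2 inj_on_subset[OF inj_shift_pt]], rotated])
      simp
  moreover have "reduce (map f (reading_order (k1 + k2) (l1 + l2))) \<in> H"
    if f: "f respects same_block ?B" for f :: "pt \<Rightarrow> nat"
  proof -
    have "f respects same_block B1"
      by (rule congruentI, rule congruentD[OF f]) (use same_block_mono[of B1 ?B] in blast)
    then have "reduce (map f (reading_order k1 l1)) \<in> H"
      using assms(1) by (simp add: p C_H_word)
    moreover have "(f \<circ> ?s) respects same_block B2"
    proof (rule congruentI)
      fix x y assume "(x, y) \<in> same_block B2"
      then have "(?s x, ?s y) \<in> same_block ?B"
        using same_block_image same_block_mono[of _ ?B] by blast
      then show "(f \<circ> ?s) x = (f \<circ> ?s) y" by (simp add: congruentD[OF f])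
    qed
    then have "reduce (map (f \<circ> ?s) (reading_order k2 l2)) \<in> H"
      using assms(2) by (simp add: q C_H_word)
    ultimately show ?thesis
      using reduce_insert_in_H by (simp add: reading_order_tensor reading_order_def[of k1 l1])
  qed
  ultimately show ?thesis by (simp add: p q tensor_def C_H_iff)
qed

lemma C_H_pcomp:
  assumes "p \<in> C_H H" and "q \<in> C_H H" and "fst (snd p) = fst q"
  shows "pcomp p q \<in> C_H H"
proof -
  obtain k l B where p: "p = (k, l, B)" by (cases p)
  obtain m C where q: "q = (l, m, C)" using assms(3) p by (cases q) auto
  define R where "R = map_prod top_emb top_emb ` same_block B \<union> map_prod bot_emb bot_emb ` same_block C"
  define Q where "Q = (\<lambda>x. {y \<in> pts k m. (out_emb x, out_emb y) \<in> R\<^sup>*}) ` pts k m"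
  have "sym R" unfolding R_def same_block_def sym_def by blast
  then have equiv: "equiv UNIV (R\<^sup>*)"
    by (intro equivI refl_rtrancl sym_rtrancl trans_rtrancl) auto
  have "partition_on (pts k m) Q"
    unfolding Q_def by (rule partition_on_classes[OF equiv])
  moreover have "reduce (map f (reading_order k m)) \<in> H"
    if f: "f respects same_block Q" for f :: "pt \<Rightarrow> nat"
  proof -
    have "f x = f y" if "x \<in> pts k m" "y \<in> pts k m" "(out_emb x, out_emb y) \<in> R\<^sup>*" for x y
    proof (rule congruentD[OF f])
      let ?b = "{z \<in> pts k m. (out_emb x, out_emb z) \<in> R\<^sup>*}"
      have "?b \<in> Q" using that(1) unfolding Q_def by (rule imageI)
      moreover have "x \<in> ?b" and "y \<in> ?b" using that by simp_all
      ultimately show "(x, y) \<in> same_block Q"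
        by (rule same_blockI)
    qed
    then obtain F where F: "F respects R\<^sup>*" and F_out: "\<forall>x\<in>pts k m. F (out_emb x) = f x"
      using extend_along_equiv[OF equiv] by blast
    have "(x, y) \<in> same_block B \<Longrightarrow> (top_emb x, top_emb y) \<in> R\<^sup>*"
      and "(x, y) \<in> same_block C \<Longrightarrow> (bot_emb x, bot_emb y) \<in> R\<^sup>*" for x y
      unfolding R_def by force+
    then have "(F \<circ> top_emb) respects same_block B" and "(F \<circ> bot_emb) respects same_block C"
      by (auto intro!: congruentI congruentD[OF F])
    then have top: "reduce (map (F \<circ> top_emb) (reading_order k l)) \<in> H"
      and bot: "reduce (map (F \<circ> bot_emb) (reading_order l m)) \<in> H"
      using assms(1,2) by (simp_all add: p q C_H_word)
    let ?U = "map (\<lambda>i. F (0, i)) [0..<k]" and ?M = "map (\<lambda>j. F (1, j)) (rev [0..<l])"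
      and ?L = "map (\<lambda>j. F (2, j)) (rev [0..<m])"
    have "map (F \<circ> top_emb) (reading_order k l) = ?U @ ?M"
      and "map (F \<circ> bot_emb) (reading_order l m) = rev ?M @ ?L"
      by (simp_all add: reading_order_def rev_map)
    then have "reduce (?U @ ?L) \<in> H"
      using reduce_cancel_in_H top bot by metis
    moreover have "map f (reading_order k m) = map (F \<circ> out_emb) (reading_order k m)"
      by (simp add: F_out set_reading_order)
    moreover have "map (F \<circ> out_emb) (reading_order k m) = ?U @ ?L"
      by (simp add: reading_order_def)
    ultimately show ?thesis by simp
  qed
  moreover have "pcomp p q = (k, m, Q)"
    by (simp add: p q pcomp_def Q_def R_def Let_def)
  ultimately show ?thesis by (simp add: C_H_iff)
qed

lemma C_H_single_block:
  assumes "pts k l \<noteq> {}" and "even (k + l)"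
  shows "(k, l, {pts k l}) \<in> C_H H"
proof (rule C_H_intro[where g = "\<lambda>_. 0"])
  show "partition_on (pts k l) {pts k l}" by (rule partition_on_space[OF assms(1)])
  show "(x, y) \<in> same_block {pts k l}" if "x \<in> pts k l" "y \<in> pts k l" for x y
    using that by (simp add: same_block_def)
  obtain n where "k + l = 2 * n" using assms(2) by (elim evenE)
  then show "reduce (map (\<lambda>_. 0) (reading_order k l)) \<in> H"
    by (simp add: map_replicate_const length_reading_order reduce_replicate_double Nil_in_H)
qed

lemma C_H_pair_part: "pair_part \<in> C_H H"
proof -
  have "pts 0 2 = {Lo 0, Lo 1}"
    by (auto simp: set_reading_order[symmetric] reading_order_def eval_nat_numeral)
  then show ?thesis using C_H_single_block[of 0 2] by (simp add: pair_part_def)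
qed

lemma C_H_id_part: "id_part \<in> C_H H"
proof -
  have "pts 1 1 = {Up 0, Lo 0}"
    by (auto simp: set_reading_order[symmetric] reading_order_def)
  then show ?thesis using C_H_single_block[of 1 1] by (simp add: id_part_def)
qed

lemma C_H_four_block: "four_block \<in> C_H H"
proof -
  have "pts 0 4 = {Lo 0, Lo 1, Lo 2, Lo 3}"
    by (auto simp: set_reading_order[symmetric] reading_order_def eval_nat_numeral)
  then show ?thesis using C_H_single_block[of 0 4] by (simp add: four_block_def)
qed

lemma C_H_pair_positioner: "pair_positioner \<in> C_H H"
proof -
  have pts: "pts 3 3 = {Up 0, Up 1, Up 2, Lo 0, Lo 1, Lo 2}"
    by (auto simp: set_reading_order[symmetric] reading_order_def eval_nat_numeral)
  let ?g = "\<lambda>x. if x \<in> {Up 2, Lo 0} then 1 else 0 :: nat"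
  have "(3, 3, {{Up 0, Up 1, Lo 1, Lo 2}, {Up 2, Lo 0}}) \<in> C_H H"
  proof (rule C_H_intro[where g = ?g])
    show "partition_on (pts 3 3) {{Up 0, Up 1, Lo 1, Lo 2}, {Up 2, Lo 0}}"
      unfolding pts by (rule partition_onI) (auto simp: disjnt_def)
    show "(x, y) \<in> same_block {{Up 0, Up 1, Lo 1, Lo 2}, {Up 2, Lo 0}}"
      if "x \<in> pts 3 3" "y \<in> pts 3 3" "?g x = ?g y" for x y
    proof -
      have "x \<in> {Up 2, Lo 0} \<longleftrightarrow> y \<in> {Up 2, Lo 0}"
        using that(3) by (auto split: if_splits)
      moreover have "z \<in> {Up 0, Up 1, Lo 1, Lo 2} \<longleftrightarrow> z \<notin> {Up 2, Lo 0}" if "z \<in> pts 3 3" for z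
        using that unfolding pts by auto
      ultimately show ?thesis
        using that(1,2) unfolding same_block_def by blast
    qed
    show "reduce (map ?g (reading_order 3 3)) \<in> H"
      by (simp add: reading_order_def eval_nat_numeral reduce_def Nil_in_H)
  qed
  then show ?thesis by (simp add: pair_positioner_def)
qed

lemma Even_sub_subset_if_double_singleton:
  assumes "double_singleton \<in> C_H H"
  shows "Even_sub \<subseteq> H"
proof
  fix w assume w: "w \<in> Even_sub"
  let ?f = "\<lambda>x. if x = Lo 0 then 0 else 1 :: nat"
  have "?f respects same_block {{Lo 0}, {Lo 1}}"
    by (rule congruentI) (auto simp: same_block_def)
  then have "reduce (map ?f (reading_order 0 2)) \<in> H"
    using assms by (simp add: double_singleton_def C_H_word)
  then have "reduce [1, 0] \<in> H"
    by (simp add: reading_order_def eval_nat_numeral)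
  then have "reduce w \<in> H"
    using w even_word_in_H[of 1 0 w] by (simp add: Even_sub_def)
  then show "w \<in> H"
    using w by (simp add: Even_sub_def Z2inf_def reduce_reduced)
qed

end

theorem mainTheorem7:
  assumes "subgroup H Z2inf" and "H \<subseteq> Even_sub" and "H \<noteq> Even_sub"
    and "S0_invariant H"
  shows "simplifiable_hyperoctahedral (C_H H)"
proof -
  interpret S0_invariant_subgroup H
    by (rule S0_invariant_subgroup.intro[OF assms(1,4)])
  have "C_H H \<subseteq> AllPart"
    by (auto simp: C_H_def)
  then have "category_of_partitions (C_H H)"
    unfolding category_of_partitions_def
    by (simp add: C_H_pair_part C_H_id_part C_H_tensor C_H_pcomp C_H_involution
        C_H_rotUL C_H_rotUR C_H_rotLU C_H_rotLR)
  moreover have "double_singleton \<notin> C_H H"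
    using Even_sub_subset_if_double_singleton assms(2,3) by blast
  ultimately show ?thesis
    unfolding simplifiable_hyperoctahedral_def hyperoctahedral_def
    using C_H_four_block C_H_pair_positioner by blast
qed

end
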